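(* Let $\alpha\in(0,1)$, $\gamma>0$, $\delta>0$, $\lambda>0$, $\epsilon>0$, let $(\bar y,\bar C)$ be an optimal solution of the LP, and let ALG be run on it. For every task $T_{i,j}$, let $\bar E_{i,j}=\sum_{s\in\mathcal V}\sum_{t=0}^u\bar y_{i,j,s,t}|I_t|s^\beta$ and let $E_{i,j}=v_{i,j}s_{i,j}^{\beta-1}$ be the energy consumed by $T_{i,j}$ in the schedule of ALG. Then $$E_{i,j}\le\frac{1}{\gamma^{\beta-1}\alpha^{\beta}}\,\bar E_{i,j}.$$
   Context: Problem MR. Jobs $\mathcal J=\{1,\dots,n\}$, processors $\mathcal P=\{1,\dots,m\}$. Job $j$ has weight $w_j>0$, release date $r_j\ge0$, and a nonempty set of Map tasks and a nonempty set of Reduce tasks, preassigned to processors with at most one task of each job per processor; $T_{i,j}$ is the task of job $j$ on processor $i$, with work $v_{i,j}\ge0$; $\mathcal T,\mathcal M,\mathcal R$ are the sets of all, Map, Reduce tasks. Running a task at speed $s$ for time $v/s$ uses energy $v s^{\beta-1}$ ($\beta>1$ fixed); $E>0$ is the energy budget. Notation: $w_{\min},w_{\max}$ min/max weights, $r_{\max}=\max_j r_j$, $v_{\max}=\max v_{i,j}$, $v_{\min}=\min\{v_{i,j}:v_{i,j}>0\}$, $t_{\max}=\frac{w_{\max}}{w_{\min}}\big(nr_{\max}+n(n+1)(|\mathcal T|v_{\max}^\beta/E)^{1/(\beta-1)}\big)$, $s_L=v_{\min}/t_{\max}$, $s_U=(E/v_{\min})^{1/(\beta-1)}$, $k=\lceil\log_{1+\epsilon}(s_U/s_L)\rceil$,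 $\mathcal V=\{s_L(1+\epsilon)^\ell:0\le\ell\le k\}$. LP: let $u$ be the least integer with $\lambda(1+\delta)^{u-1}\ge t_{\max}$, $\tau_0=0$, $\tau_t=\lambda(1+\delta)^{t-1}$ ($1\le t\le u+1$), $I_t=(\tau_t,\tau_{t+1}]$ of length $|I_t|$, $p_{i,j,s}=v_{i,j}/s$. Variables $y_{i,j,s,t},C_{i,j},C_j\ge0$. Minimize $\sum_jw_jC_j$ s.t. (1) $\sum_s\sum_{t=0}^u y_{i,j,s,t}|I_t|/p_{i,j,s}=1$ for all tasks; (2) $\sum_{j}\sum_s y_{i,j,s,t}\le1$ for all $i,t$; (3) $C_{i,j}\ge\frac12\sum_s y_{i,j,s,0}|I_0|(\frac1{p_{i,j,s}}+1)+\sum_{t=1}^u\sum_s(\frac{y_{i,j,s,t}|I_t|}{p_{i,j,s}}\tau_t+\frac12y_{i,j,s,t}|I_t|)$; (4) $C_j\ge C_{i,j}$; (5) $\sum_{T_{i,j}}\sum_s\sum_t y_{i,j,s,t}|I_t|s^\beta\le E$; (6) for $T_{i,j}\in\mathcal M$, $T_{i',j}\in\mathcal R$, $0\le\ell\le u$: $\sum_{t=0}^\ell\sum_s\frac{y_{i,j,s,t}|I_t|}{p_{i,j,s}}\ge\sum_{t=0}^\ell\sum_s\frac{y_{i',j,s,t}|I_t|}{p_{i',j,s}}$; (7) $y_{i,j,s,t}=0$ whenever $\tau_t<r_j$. Algorithm ALG (parameters $\alpha,\gamma$): from $\bar y$, the $\alpha$-point of a task is $t^\alpha_{i,j}=\min\{\ell:\sum_{t=0}^\ell\sum_s\bar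 y_{i,j,s,t}|I_t|/p_{i,j,s}\ge\alpha\}$, its processing time is $p_{i,j}=\gamma\sum_{t=0}^{t^\alpha_{i,j}}\sum_s\bar y_{i,j,s,t}|I_t|$ and its speed is $s_{i,j}=v_{i,j}/p_{i,j}$ (the tasks are then list-scheduled by $\alpha$-point on their processors). *)

theory Defs
  imports Complex_Main
begin

text \<open>An instance of Problem MR. Tasks are identified with pairs (i, j) =
(processor, job). Jobs are 1..n, processors are 1..m.\<close>

record mr_inst =
  nJobs :: nat
  nProcs :: nat
  wt :: "nat \<Rightarrow> real"
  rel :: "nat \<Rightarrow> real"
  MapT :: "(nat \<times> nat) set"
  RedT :: "(nat \<times> nat) set"
  work :: "nat \<Rightarrow> nat \<Rightarrow> real"
  beta :: real
  Ebudget :: real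

definition jobs :: "mr_inst \<Rightarrow> nat set" where
  "jobs I = {1..nJobs I}"

definition procs :: "mr_inst \<Rightarrow> nat set" where
  "procs I = {1..nProcs I}"

definition tasks :: "mr_inst \<Rightarrow> (nat \<times> nat) set" where
  "tasks I = MapT I \<union> RedT I"

definition valid_inst :: "mr_inst \<Rightarrow> bool" where
  "valid_inst I \<longleftrightarrow>
     nJobs I \<ge> 1 \<and> nProcs I \<ge> 1 \<and>
     (\<forall>j\<in>jobs I. wt I j > 0 \<and> rel I j \<ge> 0) \<and>
     MapT I \<subseteq> procs I \<times> jobs I \<and> RedT I \<subseteq> procs I \<times> jobs I \<and>
     MapT I \<inter> RedT I = {} \<and>
     (\<forall>j\<in>jobs I. (\<exists>i. (i, j) \<in> MapT I) \<and> (\<exists>i. (i, j) \<in> RedT I)) \<and>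
     (\<forall>i j. work I i j \<ge> 0) \<and>
     (\<forall>(i, j)\<in>tasks I. work I i j > 0) \<and>
     beta I > 1 \<and> Ebudget I > 0"

definition w_min :: "mr_inst \<Rightarrow> real" where
  "w_min I = Min (wt I ` jobs I)"
definition w_max :: "mr_inst \<Rightarrow> real" where
  "w_max I = Max (wt I ` jobs I)"
definition r_max :: "mr_inst \<Rightarrow> real" where
  "r_max I = Max (rel I ` jobs I)"
definition v_max :: "mr_inst \<Rightarrow> real" where
  "v_max I = Max ((\<lambda>(i, j). work I i j) ` tasks I)"
definition v_min :: "mr_inst \<Rightarrow> real" where
  "v_min I = Min {work I i j | i j. (i, j) \<in> tasks I \<and> work I i j > 0}"

definition t_max :: "mr_inst \<Rightarrow> real" where
  "t_max I = w_max I / w_min I *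
     (real (nJobs I) * r_max I + real (nJobs I) * real (nJobs I + 1) *
       (real (card (tasks I)) * v_max I powr beta I / Ebudget I) powr (1 / (beta I - 1)))"

definition s_L :: "mr_inst \<Rightarrow> real" where
  "s_L I = v_min I / t_max I"
definition s_U :: "mr_inst \<Rightarrow> real" where
  "s_U I = (Ebudget I / v_min I) powr (1 / (beta I - 1))"
definition kk :: "mr_inst \<Rightarrow> real \<Rightarrow> int" where
  "kk I \<epsilon> = \<lceil>log (1 + \<epsilon>) (s_U I / s_L I)\<rceil>"

definition speeds :: "mr_inst \<Rightarrow> real \<Rightarrow> real set" where
  "speeds I \<epsilon> = {s_L I * (1 + \<epsilon>) ^ l | l. int l \<le> kk I \<epsilon>}"

definition uu :: "mr_inst \<Rightarrow> real \<Rightarrow> real \<Rightarrow> nat" where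
  "uu I lam \<delta> = (LEAST u::nat. lam * (1 + \<delta>) powr (real u - 1) \<ge> t_max I)"

definition tau :: "real \<Rightarrow> real \<Rightarrow> nat \<Rightarrow> real" where
  "tau lam \<delta> t = (if t = 0 then 0 else lam * (1 + \<delta>) ^ (t - 1))"

definition ilen :: "real \<Rightarrow> real \<Rightarrow> nat \<Rightarrow> real" where
  "ilen lam \<delta> t = tau lam \<delta> (Suc t) - tau lam \<delta> t"

definition ptime :: "mr_inst \<Rightarrow> nat \<Rightarrow> nat \<Rightarrow> real \<Rightarrow> real" where
  "ptime I i j s = work I i j / s"

definition lp_feasible :: "mr_inst \<Rightarrow> real \<Rightarrow> real \<Rightarrow> real \<Rightarrow>
    (nat \<Rightarrow> nat \<Rightarrow> real \<Rightarrow> nat \<Rightarrow> real) \<Rightarrow> (nat \<Rightarrow> nat \<Rightarrow> real) \<Rightarrow> (nat \<Rightarrow> real) \<Rightarrow> bool" where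
  "lp_feasible I \<epsilon> lam \<delta> y Ct C \<longleftrightarrow>
    (let V = speeds I \<epsilon>; u = uu I lam \<delta>; L = ilen lam \<delta>; \<tau> = tau lam \<delta>; p = ptime I in
     \<comment> \<open>nonnegativity\<close>
     (\<forall>(i, j)\<in>tasks I. \<forall>s\<in>V. \<forall>t\<le>u. y i j s t \<ge> 0) \<and>
     (\<forall>(i, j)\<in>tasks I. Ct i j \<ge> 0) \<and>
     (\<forall>j\<in>jobs I. C j \<ge> 0) \<and>
     \<comment> \<open>(1)\<close>
     (\<forall>(i, j)\<in>tasks I. (\<Sum>s\<in>V. \<Sum>t=0..u. y i j s t * L t / p i j s) = 1) \<and>
     \<comment> \<open>(2)\<close>
     (\<forall>i\<in>procs I. \<forall>t\<le>u.
        (\<Sum>j\<in>{j. (i, j) \<in> tasks I}. \<Sum>s\<in>V. y i j s t) \<le> 1) \<and>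
     \<comment> \<open>(3)\<close>
     (\<forall>(i, j)\<in>tasks I.
        Ct i j \<ge> 1/2 * (\<Sum>s\<in>V. y i j s 0 * L 0 * (1 / p i j s + 1))
          + (\<Sum>t=1..u. \<Sum>s\<in>V. y i j s t * L t / p i j s * \<tau> t + 1/2 * y i j s t * L t)) \<and>
     \<comment> \<open>(4)\<close>
     (\<forall>(i, j)\<in>tasks I. C j \<ge> Ct i j) \<and>
     \<comment> \<open>(5)\<close>
     (\<Sum>(i, j)\<in>tasks I. \<Sum>s\<in>V. \<Sum>t=0..u. y i j s t * L t * s powr beta I) \<le> Ebudget I \<and>
     \<comment> \<open>(6)\<close>
     (\<forall>i i' j l. (i, j) \<in> MapT I \<longrightarrow> (i', j) \<in> RedT I \<longrightarrow> l \<le> u \<longrightarrow>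
        (\<Sum>t=0..l. \<Sum>s\<in>V. y i j s t * L t / p i j s)
          \<ge> (\<Sum>t=0..l. \<Sum>s\<in>V. y i' j s t * L t / p i' j s)) \<and>
     \<comment> \<open>(7)\<close>
     (\<forall>(i, j)\<in>tasks I. \<forall>s\<in>V. \<forall>t\<le>u. \<tau> t < rel I j \<longrightarrow> y i j s t = 0))"

definition lp_objective :: "mr_inst \<Rightarrow> (nat \<Rightarrow> real) \<Rightarrow> real" where
  "lp_objective I C = (\<Sum>j\<in>jobs I. wt I j * C j)"

definition lp_optimal :: "mr_inst \<Rightarrow> real \<Rightarrow> real \<Rightarrow> real \<Rightarrow>
    (nat \<Rightarrow> nat \<Rightarrow> real \<Rightarrow> nat \<Rightarrow> real) \<Rightarrow> (nat \<Rightarrow> nat \<Rightarrow> real) \<Rightarrow> (nat \<Rightarrow> real) \<Rightarrow> bool" where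
  "lp_optimal I \<epsilon> lam \<delta> y Ct C \<longleftrightarrow>
     lp_feasible I \<epsilon> lam \<delta> y Ct C \<and>
     (\<forall>y' Ct' C'. lp_feasible I \<epsilon> lam \<delta> y' Ct' C' \<longrightarrow> lp_objective I C \<le> lp_objective I C')"

definition alpha_point :: "mr_inst \<Rightarrow> real \<Rightarrow> real \<Rightarrow> real \<Rightarrow> real \<Rightarrow>
    (nat \<Rightarrow> nat \<Rightarrow> real \<Rightarrow> nat \<Rightarrow> real) \<Rightarrow> nat \<Rightarrow> nat \<Rightarrow> nat" where
  "alpha_point I \<epsilon> lam \<delta> \<alpha> y i j =
     (LEAST l. (\<Sum>t=0..l. \<Sum>s\<in>speeds I \<epsilon>. y i j s t * ilen lam \<delta> t / ptime I i j s) \<ge> \<alpha>)"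

definition alg_ptime :: "mr_inst \<Rightarrow> real \<Rightarrow> real \<Rightarrow> real \<Rightarrow> real \<Rightarrow> real \<Rightarrow>
    (nat \<Rightarrow> nat \<Rightarrow> real \<Rightarrow> nat \<Rightarrow> real) \<Rightarrow> nat \<Rightarrow> nat \<Rightarrow> real" where
  "alg_ptime I \<epsilon> lam \<delta> \<alpha> \<gamma> y i j =
     \<gamma> * (\<Sum>t=0..alpha_point I \<epsilon> lam \<delta> \<alpha> y i j. \<Sum>s\<in>speeds I \<epsilon>. y i j s t * ilen lam \<delta> t)"

definition alg_speed :: "mr_inst \<Rightarrow> real \<Rightarrow> real \<Rightarrow> real \<Rightarrow> real \<Rightarrow> real \<Rightarrow>
    (nat \<Rightarrow> nat \<Rightarrow> real \<Rightarrow> nat \<Rightarrow> real) \<Rightarrow> nat \<Rightarrow> nat \<Rightarrow> real" where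
  "alg_speed I \<epsilon> lam \<delta> \<alpha> \<gamma> y i j = work I i j / alg_ptime I \<epsilon> lam \<delta> \<alpha> \<gamma> y i j"

definition alg_energy :: "mr_inst \<Rightarrow> real \<Rightarrow> real \<Rightarrow> real \<Rightarrow> real \<Rightarrow> real \<Rightarrow>
    (nat \<Rightarrow> nat \<Rightarrow> real \<Rightarrow> nat \<Rightarrow> real) \<Rightarrow> nat \<Rightarrow> nat \<Rightarrow> real" where
  "alg_energy I \<epsilon> lam \<delta> \<alpha> \<gamma> y i j =
     work I i j * alg_speed I \<epsilon> lam \<delta> \<alpha> \<gamma> y i j powr (beta I - 1)"

definition lp_energy :: "mr_inst \<Rightarrow> real \<Rightarrow> real \<Rightarrow> real \<Rightarrow>
    (nat \<Rightarrow> nat \<Rightarrow> real \<Rightarrow> nat \<Rightarrow> real) \<Rightarrow> nat \<Rightarrow> nat \<Rightarrow> real" where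
  "lp_energy I \<epsilon> lam \<delta> y i j =
     (\<Sum>s\<in>speeds I \<epsilon>. \<Sum>t=0..uu I lam \<delta>. y i j s t * ilen lam \<delta> t * s powr beta I)"

end

theory Submission
  imports Defs "HOL-Analysis.Analysis"
begin

text \<open>A task runs in ALG for \<gamma> times the LP time spent on it up to its \<alpha>-point,
during which the LP already processes at least an \<alpha>-fraction of its work. Hence the
ALG speed is at most the LP's average speed over that prefix divided by \<alpha>\<gamma>, and by
convexity of \<open>s \<mapsto> s powr \<beta>\<close> (Jensen) the energy of the prefix at that average
speed is at most the LP energy of the prefix.\<close>

lemma powr_weighted_sum_le:
  fixes x s :: "'k \<Rightarrow> real"
  assumes "finite S" and "\<And>k. k \<in> S \<Longrightarrow> x k \<ge> 0" and "\<And>k. k \<in> S \<Longrightarrow> s k > 0"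
    and "(\<Sum>k\<in>S. x k) > 0" and "b \<ge> 1"
  shows "(\<Sum>k\<in>S. x k * s k) powr b \<le> (\<Sum>k\<in>S. x k * s k powr b) * (\<Sum>k\<in>S. x k) powr (b - 1)"
proof -
  define P where "P = (\<Sum>k\<in>S. x k)"
  define Q where "Q = (\<Sum>k\<in>S. x k * s k)"
  have P: "P > 0" using assms(4) by (simp add: P_def)
  have Q: "Q \<ge> 0" unfolding Q_def using assms(2,3) by (intro sum_nonneg) (simp add: less_imp_le)
  have "(\<lambda>z. z powr b) (\<Sum>k\<in>S. (x k / P) *\<^sub>R s k) \<le> (\<Sum>k\<in>S. (x k / P) * s k powr b)"
    using assms P by (intro convex_on_sum[OF assms(1) _ powr_convex[OF assms(5)]])
      (auto simp: P_def sum_divide_distrib[symmetric])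
  hence "(Q / P) powr b \<le> (\<Sum>k\<in>S. x k * s k powr b) / P"
    by (simp add: Q_def sum_divide_distrib[symmetric])
  moreover have "(Q / P) powr b = Q powr b / (P powr (b - 1) * P)"
    using P Q by (simp add: powr_divide powr_diff)
  ultimately have "Q powr b / P powr (b - 1) \<le> (\<Sum>k\<in>S. x k * s k powr b)"
    using P by (simp add: divide_simps mult.commute mult.left_commute)
  thus ?thesis using P by (simp add: P_def Q_def divide_simps)
qed

lemma energy_le_of_work_fraction:
  fixes x s :: "'k \<Rightarrow> real"
  assumes "finite S" and "\<And>k. k \<in> S \<Longrightarrow> x k \<ge> 0" and "\<And>k. k \<in> S \<Longrightarrow> s k > 0"
    and "v > 0" and "\<alpha> > 0" and "\<gamma> > 0" and "b \<ge> 1"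
    and work: "\<alpha> * v \<le> (\<Sum>k\<in>S. x k * s k)"
  shows "v * (v / (\<gamma> * (\<Sum>k\<in>S. x k))) powr (b - 1)
           \<le> (\<Sum>k\<in>S. x k * s k powr b) / (\<gamma> powr (b - 1) * \<alpha> powr b)"
proof -
  define P where "P = (\<Sum>k\<in>S. x k)"
  define R where "R = (\<Sum>k\<in>S. x k * s k powr b)"
  have "P > 0"
  proof (rule ccontr)
    assume "\<not> P > 0"
    hence "P = 0" using assms(2) sum_nonneg[of S x] by (force simp: P_def)
    hence "\<forall>k\<in>S. x k = 0" using sum_nonneg_eq_0_iff[OF assms(1), of x] assms(2) by (simp add: P_def)
    thus False using work mult_pos_pos[OF assms(5,4)] by simp
  qed
  have "(\<alpha> * v) powr b \<le> (\<Sum>k\<in>S. x k * s k) powr b"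
    using work assms(4,5,7) by (intro powr_mono2) auto
  also have "\<dots> \<le> R * P powr (b - 1)"
    unfolding R_def P_def using powr_weighted_sum_le assms \<open>P > 0\<close> P_def by blast
  finally have "v powr b * \<alpha> powr b \<le> R * P powr (b - 1)"
    using assms(4,5) by (simp add: powr_mult mult.commute)
  have "v * (v / (\<gamma> * P)) powr (b - 1) = v powr b / (\<gamma> powr (b - 1) * P powr (b - 1))"
    using assms(4,6) \<open>P > 0\<close> by (simp add: powr_divide powr_mult powr_diff)
  also have "\<dots> \<le> R / (\<gamma> powr (b - 1) * \<alpha> powr b)"
    using \<open>v powr b * \<alpha> powr b \<le> R * P powr (b - 1)\<close> assms(4,5,6) \<open>P > 0\<close>
    by (simp add: divide_simps mult.commute mult.left_commute)
  finally show ?thesis by (simp add: P_def R_def)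
qed

lemma finite_tasks: "valid_inst I \<Longrightarrow> finite (tasks I)"
  by (rule finite_subset[of _ "procs I \<times> jobs I"])
    (auto simp: valid_inst_def tasks_def procs_def jobs_def)

lemma tasks_nonempty: "valid_inst I \<Longrightarrow> tasks I \<noteq> {}"
  by (auto simp: valid_inst_def tasks_def jobs_def)

lemma v_min_pos:
  assumes "valid_inst I" shows "v_min I > 0"
proof -
  obtain i j where ij: "(i, j) \<in> tasks I" using tasks_nonempty[OF assms] by auto
  have "{work I i j | i j. (i, j) \<in> tasks I \<and> work I i j > 0} \<subseteq> (\<lambda>(i, j). work I i j) ` tasks I"
    by auto
  hence "finite {work I i j | i j. (i, j) \<in> tasks I \<and> work I i j > 0}"
    using finite_tasks[OF assms] finite_subset by blast
  moreover have "work I i j > 0" using assms ij by (auto simp: valid_inst_def)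
  ultimately show ?thesis using ij unfolding v_min_def by (subst Min_gr_iff) auto
qed

lemma t_max_pos:
  assumes "valid_inst I" shows "t_max I > 0"
proof -
  have jobs: "finite (jobs I)" "jobs I \<noteq> {}" using assms by (auto simp: valid_inst_def jobs_def)
  have "w_min I > 0" "w_max I > 0" "r_max I \<ge> 0"
    using jobs assms unfolding w_min_def w_max_def r_max_def valid_inst_def
    by (subst Min_gr_iff Max_gr_iff Max_ge_iff; auto)+
  moreover have "v_max I > 0"
    using finite_tasks[OF assms] tasks_nonempty[OF assms] assms
    unfolding v_max_def valid_inst_def by (subst Max_gr_iff) force+
  moreover have "card (tasks I) > 0"
    using finite_tasks[OF assms] tasks_nonempty[OF assms] by (simp add: card_gt_0_iff)
  ultimately show ?thesis
    using assms unfolding t_max_def valid_inst_def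
    by (intro mult_pos_pos divide_pos_pos add_nonneg_pos) auto
qed

lemma speeds_pos: "valid_inst I \<Longrightarrow> \<epsilon> > 0 \<Longrightarrow> s \<in> speeds I \<epsilon> \<Longrightarrow> s > 0"
  using v_min_pos t_max_pos by (auto simp: speeds_def s_L_def)

lemma finite_speeds: "finite (speeds I \<epsilon>)"
  by (rule finite_subset[of _ "(\<lambda>l. s_L I * (1 + \<epsilon>) ^ l) ` {..nat (kk I \<epsilon>)}"])
    (force simp: speeds_def)+

lemma ilen_nonneg:
  assumes "lam > 0" and "\<delta> \<ge> 0" shows "ilen lam \<delta> t \<ge> 0"
proof (cases t)
  case (Suc n)
  have "(1 + \<delta>) ^ n \<le> (1 + \<delta>) ^ Suc n" using assms by (intro power_increasing) auto
  thus ?thesis using Suc assms by (simp add: ilen_def tau_def)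
qed (use assms in \<open>simp add: ilen_def tau_def\<close>)

text \<open>Constraint (1) makes the whole horizon process the full task, so the \<alpha>-point exists.\<close>

lemma alpha_point_props:
  assumes "lp_feasible I \<epsilon> lam \<delta> y Ct C" and "(i, j) \<in> tasks I" and "\<alpha> \<le> 1"
  defines "a \<equiv> alpha_point I \<epsilon> lam \<delta> \<alpha> y i j"
  shows "a \<le> uu I lam \<delta>"
    and "\<alpha> \<le> (\<Sum>t=0..a. \<Sum>s\<in>speeds I \<epsilon>. y i j s t * ilen lam \<delta> t / ptime I i j s)"
proof -
  let ?F = "\<lambda>l. \<Sum>t=0..l. \<Sum>s\<in>speeds I \<epsilon>. y i j s t * ilen lam \<delta> t / ptime I i j s"
  have "?F (uu I lam \<delta>) = 1"
    using assms(1,2) unfolding lp_feasible_def Let_def by (subst sum.swap) auto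
  hence reach: "\<alpha> \<le> ?F (uu I lam \<delta>)" using assms(3) by simp
  show "a \<le> uu I lam \<delta>" unfolding a_def alpha_point_def by (rule Least_le) (rule reach)
  show "\<alpha> \<le> ?F a" unfolding a_def alpha_point_def by (rule LeastI) (rule reach)
qed

lemma lp_feasible_nonneg:
  assumes "lp_feasible I \<epsilon> lam \<delta> y Ct C" and "(i, j) \<in> tasks I"
    and "s \<in> speeds I \<epsilon>" and "t \<le> uu I lam \<delta>"
  shows "y i j s t \<ge> 0"
  using assms unfolding lp_feasible_def Let_def by auto

lemma lp_prefix_energy_le:
  assumes "lp_feasible I \<epsilon> lam \<delta> y Ct C" and "(i, j) \<in> tasks I"
    and "lam > 0" and "\<delta> \<ge> 0" and "a \<le> uu I lam \<delta>"
  shows "(\<Sum>t=0..a. \<Sum>s\<in>speeds I \<epsilon>. y i j s t * ilen lam \<delta> t * s powr beta I)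
           \<le> lp_energy I \<epsilon> lam \<delta> y i j"
proof -
  have "(\<Sum>t=0..a. \<Sum>s\<in>speeds I \<epsilon>. y i j s t * ilen lam \<delta> t * s powr beta I)
          \<le> (\<Sum>t=0..uu I lam \<delta>. \<Sum>s\<in>speeds I \<epsilon>. y i j s t * ilen lam \<delta> t * s powr beta I)"
    using assms lp_feasible_nonneg[OF assms(1,2)] ilen_nonneg[OF assms(3,4)]
    by (intro sum_mono2) (auto intro!: sum_nonneg mult_nonneg_nonneg)
  also have "\<dots> = lp_energy I \<epsilon> lam \<delta> y i j"
    unfolding lp_energy_def by (rule sum.swap)
  finally show ?thesis .
qed

theorem lemma3:
  fixes I :: mr_inst and \<alpha> \<gamma> \<delta> lam \<epsilon> :: real
    and y :: "nat \<Rightarrow> nat \<Rightarrow> real \<Rightarrow> nat \<Rightarrow> real" and Ct :: "nat \<Rightarrow> nat \<Rightarrow> real" and C :: "nat \<Rightarrow> real"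
    and i j :: nat
  assumes "valid_inst I"
    and "0 < \<alpha>" and "\<alpha> < 1" and "\<gamma> > 0" and "\<delta> > 0" and "lam > 0" and "\<epsilon> > 0"
    and "lp_optimal I \<epsilon> lam \<delta> y Ct C"
    and "(i, j) \<in> tasks I"
  shows "alg_energy I \<epsilon> lam \<delta> \<alpha> \<gamma> y i j
           \<le> 1 / (\<gamma> powr (beta I - 1) * \<alpha> powr beta I) * lp_energy I \<epsilon> lam \<delta> y i j"
proof -
  have feas: "lp_feasible I \<epsilon> lam \<delta> y Ct C" using assms(8) by (simp add: lp_optimal_def)
  define a where "a = alpha_point I \<epsilon> lam \<delta> \<alpha> y i j"
  define S where "S = {0..a} \<times> speeds I \<epsilon>"
  define x where "x k = y i j (snd k) (fst k) * ilen lam \<delta> (fst k)" for k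
  have sum_S: "(\<Sum>k\<in>S. f k) = (\<Sum>t=0..a. \<Sum>s\<in>speeds I \<epsilon>. f (t, s))" for f :: "_ \<Rightarrow> real"
    by (simp add: S_def sum.cartesian_product)
  have au: "a \<le> uu I lam \<delta>" and frac: "\<alpha> \<le> (\<Sum>k\<in>S. x k * snd k) / work I i j"
    using alpha_point_props[OF feas assms(9)] assms(3)
    by (auto simp: a_def sum_S x_def ptime_def sum_divide_distrib)
  have x_nonneg: "k \<in> S \<Longrightarrow> x k \<ge> 0" for k
    using lp_feasible_nonneg[OF feas assms(9)] au ilen_nonneg[OF assms(6)] assms(5)
    by (auto simp: S_def x_def)
  have ptime: "alg_ptime I \<epsilon> lam \<delta> \<alpha> \<gamma> y i j = \<gamma> * (\<Sum>k\<in>S. x k)"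
    by (simp add: alg_ptime_def a_def sum_S x_def)
  have "alg_energy I \<epsilon> lam \<delta> \<alpha> \<gamma> y i j
          \<le> (\<Sum>k\<in>S. x k * snd k powr beta I) / (\<gamma> powr (beta I - 1) * \<alpha> powr beta I)"
    unfolding alg_energy_def alg_speed_def ptime
    using frac assms(1,2,4,9) speeds_pos[OF assms(1,7)] x_nonneg finite_speeds
    by (intro energy_le_of_work_fraction) (auto simp: S_def valid_inst_def field_simps)
  also have "(\<Sum>k\<in>S. x k * snd k powr beta I) \<le> lp_energy I \<epsilon> lam \<delta> y i j"
    using lp_prefix_energy_le[OF feas assms(9,6) _ au] assms(5) by (simp add: sum_S x_def)
  finally show ?thesis using assms(2,4) by (simp add: divide_right_mono)
qed

end
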